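(* Let $\langle W,\varphi,(Y,\mathbb S,\sigma)\rangle$ be a monotone one-dimensional cocycle, $W\subseteq\mathbb R$ an open interval, with skew-product system $(X,\mathbb S_+,\pi)$, $h=\mathrm{pr}_2$, and $\tau\in\mathbb S_+$, $\tau>0$. Assume: (1) $u_1<u_2$ implies $\varphi(k\tau,u_1,y)<\varphi(k\tau,u_2,y)$ for all $k\in\mathbb N$, $y\in Y$; (2) $x_0\in X$ is positively Lagrange stable; (3) $y_0:=h(x_0)$ is asymptotically $\tau$-periodic, with $q:=\lim_{k\to\infty}\sigma(k\tau,y_0)$; (4) every $\tau$-periodic point $(u,q)$ of $(X,\mathbb S_+,\pi)$ is positively asymptotically stable. Then $x_0$ is asymptotically $\tau$-periodic.
   Context: Setting: $\mathbb S=\mathbb R$ or $\mathbb Z$; $(Y,\mathbb S,\sigma)$ two-sided dynamical system on a complete metric space; monotone cocycle $\varphi:\mathbb S_+\times W\times Y\to W$ (continuous, $\varphi(0,u,y)=u$, $\varphi(t+s,u,y)=\varphi(t,\varphi(s,u,y),\sigma(s,y))$, order preserving in $u$); skew-product $\pi(t,(u,y))=(\varphi(t,u,y),\sigma(t,y))$ on $X=W\times Y$. Positively Lagrange stable: $\{\pi(t,x_0):t\ge0\}$ precompact. $y_0$ asymptotically $\tau$-periodic: exists $q$ with $\sigma(\tau,q)=q$ and $\rho(\sigma(t,y_0),\sigma(t,q))\to0$. A $\tau$-periodic point $(u_0,q)$ (i.e. $\varphi(\tau,u_0,q)=u_0$) is positively asymptotically stable if (a) for every $\varepsilon>0$ there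 is $\delta>0$ with $|u-u_0|<\delta\Rightarrow|\varphi(t,u,q)-\varphi(t,u_0,q)|<\varepsilon$ for all $t\ge0$, and (b) there is $\gamma>0$ with $|\varphi(t,u,q)-\varphi(t,u_0,q)|\to0$ as $t\to\infty$ for all $|u-u_0|<\gamma$. $x_0$ is asymptotically $\tau$-periodic if there is $p$ with $\pi(\tau,p)=p$ and $\rho(\pi(t,x_0),\pi(t,p))\to0$. *)

theory Defs
  imports "HOL-Analysis.Analysis"
begin

definition time_set :: "real set \<Rightarrow> bool" where
  "time_set S \<longleftrightarrow> S = UNIV \<or> S = \<int>"

definition pos_part :: "real set \<Rightarrow> real set" where
  "pos_part S = {t \<in> S. 0 \<le> t}"

definition dyn_system :: "real set \<Rightarrow> (real \<Rightarrow> 'y::metric_space \<Rightarrow> 'y) \<Rightarrow> bool" where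
  "dyn_system S \<sigma> \<longleftrightarrow>
     continuous_on (S \<times> UNIV) (\<lambda>(t, y). \<sigma> t y) \<and>
     (\<forall>y. \<sigma> 0 y = y) \<and>
     (\<forall>t\<in>S. \<forall>s\<in>S. \<forall>y. \<sigma> (t + s) y = \<sigma> t (\<sigma> s y))"

definition monotone_cocycle ::
  "real set \<Rightarrow> real set \<Rightarrow> (real \<Rightarrow> real \<Rightarrow> 'y::metric_space \<Rightarrow> real) \<Rightarrow> (real \<Rightarrow> 'y \<Rightarrow> 'y) \<Rightarrow> bool" where
  "monotone_cocycle S W \<phi> \<sigma> \<longleftrightarrow>
     continuous_on (pos_part S \<times> W \<times> UNIV) (\<lambda>(t, u, y). \<phi> t u y) \<and>
     (\<forall>t\<in>pos_part S. \<forall>u\<in>W. \<forall>y. \<phi> t u y \<in> W) \<and>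
     (\<forall>u\<in>W. \<forall>y. \<phi> 0 u y = u) \<and>
     (\<forall>t\<in>pos_part S. \<forall>s\<in>pos_part S. \<forall>u\<in>W. \<forall>y.
        \<phi> (t + s) u y = \<phi> t (\<phi> s u y) (\<sigma> s y)) \<and>
     (\<forall>t\<in>pos_part S. \<forall>u1\<in>W. \<forall>u2\<in>W. \<forall>y. u1 \<le> u2 \<longrightarrow> \<phi> t u1 y \<le> \<phi> t u2 y)"

definition skew :: "(real \<Rightarrow> real \<Rightarrow> 'y \<Rightarrow> real) \<Rightarrow> (real \<Rightarrow> 'y \<Rightarrow> 'y) \<Rightarrow> real \<Rightarrow> real \<times> 'y \<Rightarrow> real \<times> 'y" where
  "skew \<phi> \<sigma> t x = (\<phi> t (fst x) (snd x), \<sigma> t (snd x))"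

definition pos_lagrange_stable ::
  "real set \<Rightarrow> ('x::metric_space) set \<Rightarrow> (real \<Rightarrow> 'x \<Rightarrow> 'x) \<Rightarrow> 'x \<Rightarrow> bool" where
  "pos_lagrange_stable S X \<pi> x0 \<longleftrightarrow>
     (\<exists>K. compact K \<and> K \<subseteq> X \<and> (\<lambda>t. \<pi> t x0) ` pos_part S \<subseteq> K)"

definition tends_zero_on :: "real set \<Rightarrow> (real \<Rightarrow> real) \<Rightarrow> bool" where
  "tends_zero_on S f \<longleftrightarrow> (\<forall>\<epsilon>>0. \<exists>T. \<forall>t\<in>S. t \<ge> T \<longrightarrow> \<bar>f t\<bar> < \<epsilon>)"

definition asymp_periodic ::
  "real set \<Rightarrow> ('z::metric_space) set \<Rightarrow> (real \<Rightarrow> 'z \<Rightarrow> 'z) \<Rightarrow> real \<Rightarrow> 'z \<Rightarrow> bool" where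
  "asymp_periodic S Z f \<tau> z0 \<longleftrightarrow>
     (\<exists>p\<in>Z. f \<tau> p = p \<and> tends_zero_on (pos_part S) (\<lambda>t. dist (f t z0) (f t p)))"

definition pos_asymp_stable ::
  "real set \<Rightarrow> real set \<Rightarrow> (real \<Rightarrow> real \<Rightarrow> 'y \<Rightarrow> real) \<Rightarrow> real \<Rightarrow> 'y \<Rightarrow> bool" where
  "pos_asymp_stable S W \<phi> u0 q \<longleftrightarrow>
     (\<forall>\<epsilon>>0. \<exists>\<delta>>0. \<forall>u\<in>W. \<bar>u - u0\<bar> < \<delta> \<longrightarrow>
        (\<forall>t\<in>pos_part S. \<bar>\<phi> t u q - \<phi> t u0 q\<bar> < \<epsilon>)) \<and>
     (\<exists>\<gamma>>0. \<forall>u\<in>W. \<bar>u - u0\<bar> < \<gamma> \<longrightarrow>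
        tends_zero_on (pos_part S) (\<lambda>t. \<phi> t u q - \<phi> t u0 q))"

end

theory Submission
  imports Defs
begin

text \<open>Sample the motion at the times \<open>k\<tau>\<close>: \<open>u\<^sub>k = \<phi>(k\<tau>, u\<^sub>0, y\<^sub>0)\<close> obeys
  \<open>u\<^sub>k\<^sub>+\<^sub>1 = \<phi>(\<tau>, u\<^sub>k, y\<^sub>k)\<close> with \<open>y\<^sub>k \<rightarrow> q\<close>, an asymptotically autonomous monotone recursion
  on the line whose limit map is the period map \<open>P = \<phi>(\<tau>, \<cdot>, q)\<close>. By Lagrange stability
  \<open>u\<^sub>k\<close> has a cluster point, the cluster points are \<open>P\<close>-invariant, and a \<open>P\<close>-orbit is
  monotone, so its limit \<open>m\<close> is a fixed point of \<open>P\<close> and again a cluster point. Since \<open>m\<close>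
  attracts a neighbourhood, \<open>P\<close> moves the points \<open>m \<plusminus> \<epsilon>\<close> inwards; by continuity so do the
  maps \<open>\<phi>(\<tau>, \<cdot>, y\<^sub>k)\<close> for large \<open>k\<close>, so \<open>[m - \<epsilon>, m + \<epsilon>]\<close> eventually traps \<open>u\<^sub>k\<close> and
  \<open>u\<^sub>k \<rightarrow> m\<close>. Uniform continuity of \<open>\<phi>\<close> on \<open>[0, \<tau>]\<close> carries this to continuous time.\<close>

lemma dist_Pair_le_add: "dist (a, b) (c, d) \<le> dist a c + dist b d"
  unfolding dist_Pair_Pair by (rule sqrt_sum_squares_le_sum) simp_all

lemma compact_insert_limit_range:
  fixes f :: "nat \<Rightarrow> 'a::topological_space"
  assumes "f \<longlonglongrightarrow> l"
  shows "compact (insert l (range f))"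
proof (rule compactI)
  fix C assume open_C: "\<forall>t\<in>C. open t" and cover: "insert l (range f) \<subseteq> \<Union>C"
  obtain U where U: "U \<in> C" "l \<in> U" using cover by auto
  obtain N where N: "\<And>n. n \<ge> N \<Longrightarrow> f n \<in> U"
    using topological_tendstoD[OF assms] open_C U unfolding eventually_sequentially by blast
  have "\<forall>n. \<exists>V\<in>C. f n \<in> V" using cover by auto
  then obtain V where V: "\<And>n. V n \<in> C" "\<And>n. f n \<in> V n" by metis
  let ?C' = "insert U (V ` {..<N})"
  have "f n \<in> \<Union>?C'" for n using N V by (cases "n < N") auto
  then have "insert l (range f) \<subseteq> \<Union>?C'" using U by auto
  moreover have "?C' \<subseteq> C" using U V by auto
  ultimately show "\<exists>C'\<subseteq>C. finite C' \<and> insert l (range f) \<subseteq> \<Union>C'" by blast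
qed

lemma uniform_limit_compose_convergent:
  fixes g :: "'a::metric_space \<Rightarrow> 'b::metric_space \<Rightarrow> 'c::metric_space"
  assumes "continuous_on (I \<times> A) (\<lambda>(s, p). g s p)" "compact I"
    and "\<And>k. x k \<in> A" "x0 \<in> A" "x \<longlonglongrightarrow> x0"
  shows "uniform_limit I (\<lambda>k s. g s (x k)) (\<lambda>s. g s x0) sequentially"
proof -
  let ?C = "I \<times> insert x0 (range x)"
  have "compact ?C" using assms(2) compact_insert_limit_range[OF assms(5)] by (rule compact_Times)
  moreover have "continuous_on ?C (\<lambda>(s, p). g s p)"
    by (rule continuous_on_subset[OF assms(1)]) (use assms(3,4) in auto)
  ultimately have unif: "uniformly_continuous_on ?C (\<lambda>(s, p). g s p)"
    using compact_uniformly_continuous by blast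
  show ?thesis unfolding uniform_limit_iff
  proof (intro allI impI)
    fix e :: real assume "e > 0"
    then obtain d where "d > 0" and d: "\<And>z z'. z \<in> ?C \<Longrightarrow> z' \<in> ?C \<Longrightarrow> dist z' z < d \<Longrightarrow>
        dist ((\<lambda>(s, p). g s p) z') ((\<lambda>(s, p). g s p) z) < e"
      using unif unfolding uniformly_continuous_on_def by metis
    show "\<forall>\<^sub>F k in sequentially. \<forall>s\<in>I. dist (g s (x k)) (g s x0) < e"
      using tendstoD[OF assms(5) \<open>d > 0\<close>]
    proof eventually_elim
      case (elim k)
      show ?case
      proof
        fix s assume "s \<in> I"
        have "dist (s, x k) (s, x0) < d" using elim by (simp add: dist_Pair_Pair)
        then show "dist (g s (x k)) (g s x0) < e" using d[of "(s, x0)" "(s, x k)"] \<open>s \<in> I\<close> by simp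
      qed
    qed
  qed
qed

section \<open>Cluster points of sequences\<close>

definition cluster_point :: "(nat \<Rightarrow> 'a::metric_space) \<Rightarrow> 'a \<Rightarrow> bool" where
  "cluster_point u v \<longleftrightarrow> (\<forall>e>0. \<exists>\<^sub>F k in sequentially. dist (u k) v < e)"

lemma cluster_point_Suc:
  assumes "cluster_point (\<lambda>k. u (Suc k)) v"
  shows "cluster_point u v"
  unfolding cluster_point_def
proof (intro allI impI)
  fix e :: real assume "e > 0"
  with assms have "\<exists>\<^sub>F k in sequentially. dist (u (Suc k)) v < e" unfolding cluster_point_def by blast
  then show "\<exists>\<^sub>F k in sequentially. dist (u k) v < e"
    unfolding frequently_def using eventually_sequentially_Suc[of "\<lambda>k. \<not> dist (u k) v < e"] by simp
qed

lemma cluster_point_in_closed: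
  assumes "closed K" "\<And>k. u k \<in> K" "cluster_point u v"
  shows "v \<in> K"
proof -
  have "\<exists>z\<in>K. dist z v < e" if "e > 0" for e
  proof -
    have "\<exists>\<^sub>F k in sequentially. dist (u k) v < e"
      using assms(3) that unfolding cluster_point_def by blast
    then obtain k where "dist (u k) v < e" using frequently_ex by blast
    then show ?thesis using assms(2) by blast
  qed
  then have "v \<in> closure K" unfolding closure_approachable by blast
  with assms(1) show ?thesis by simp
qed

lemma compact_cluster_point:
  assumes "compact K" "\<And>k. u k \<in> K"
  obtains v where "v \<in> K" "cluster_point u v"
proof -
  obtain v r where "v \<in> K" "strict_mono r" and lim: "(u \<circ> r) \<longlonglongrightarrow> v"
    using assms unfolding compact_def by metis
  have "cluster_point u v"
    unfolding cluster_point_def frequently_sequentially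
  proof (intro allI impI)
    fix e :: real and N assume "e > 0"
    then obtain J where J: "\<And>j. j \<ge> J \<Longrightarrow> dist (u (r j)) v < e"
      using lim unfolding lim_sequentially by auto
    have "N \<le> r (max N J)" using seq_suble[OF \<open>strict_mono r\<close>, of "max N J"] by simp
    moreover have "dist (u (r (max N J))) v < e" using J by simp
    ultimately show "\<exists>k\<ge>N. dist (u k) v < e" by blast
  qed
  with \<open>v \<in> K\<close> show thesis using that by blast
qed

lemma cluster_point_limit:
  assumes "\<And>n. cluster_point u (g n)" "g \<longlonglongrightarrow> m"
  shows "cluster_point u m"
  unfolding cluster_point_def
proof (intro allI impI)
  fix e :: real assume "e > 0"
  then obtain n where n: "dist (g n) m < e/2"
    using tendstoD[OF assms(2) half_gt_zero[OF \<open>e > 0\<close>]] unfolding eventually_sequentially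
    by (meson order_refl)
  have "\<exists>\<^sub>F k in sequentially. dist (u k) (g n) < e/2"
    using assms(1) half_gt_zero[OF \<open>e > 0\<close>] unfolding cluster_point_def by blast
  then show "\<exists>\<^sub>F k in sequentially. dist (u k) m < e"
  proof (rule frequently_elim1)
    fix k assume "dist (u k) (g n) < e/2"
    then show "dist (u k) m < e" using n dist_triangle[of "u k" m "g n"] by linarith
  qed
qed

lemma cluster_point_Pair:
  assumes "cluster_point u v" "y \<longlonglongrightarrow> q"
  shows "cluster_point (\<lambda>k. (u k, y k)) (v, q)"
  unfolding cluster_point_def
proof (intro allI impI)
  fix e :: real assume "e > 0"
  have "\<exists>\<^sub>F k in sequentially. dist (u k) v < e/2"
    using assms(1) half_gt_zero[OF \<open>e > 0\<close>] unfolding cluster_point_def by blast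
  moreover have "\<forall>\<^sub>F k in sequentially. dist (y k) q < e/2"
    using tendstoD[OF assms(2) half_gt_zero[OF \<open>e > 0\<close>]] .
  ultimately have "\<exists>\<^sub>F k in sequentially. dist (u k) v < e/2 \<and> dist (y k) q < e/2"
    by (rule frequently_eventually_frequently)
  then show "\<exists>\<^sub>F k in sequentially. dist (u k, y k) (v, q) < e"
  proof (rule frequently_elim1)
    fix k assume "dist (u k) v < e/2 \<and> dist (y k) q < e/2"
    then show "dist (u k, y k) (v, q) < e" using dist_Pair_le_add[of "u k" "y k" v q] by linarith
  qed
qed

lemma cluster_point_continuous_image:
  assumes "continuous_on A g" "\<And>k. w k \<in> A" "v \<in> A" "cluster_point w v"
  shows "cluster_point (\<lambda>k. g (w k)) (g v)"
  unfolding cluster_point_def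
proof (intro allI impI)
  fix e :: real assume "e > 0"
  then obtain d where "d > 0" and d: "\<And>x. x \<in> A \<Longrightarrow> dist x v < d \<Longrightarrow> dist (g x) (g v) < e"
    using assms(1,3) unfolding continuous_on_iff by blast
  have "\<exists>\<^sub>F k in sequentially. dist (w k) v < d"
    using assms(4) \<open>d > 0\<close> unfolding cluster_point_def by blast
  then show "\<exists>\<^sub>F k in sequentially. dist (g (w k)) (g v) < e"
    by (rule frequently_elim1) (use d assms(2) in blast)
qed

section \<open>Iterating a monotone map of the line\<close>

lemma funpow_in: "P ` W \<subseteq> W \<Longrightarrow> v \<in> W \<Longrightarrow> (P ^^ n) v \<in> W"
  by (induction n) auto

lemma mono_on_funpow_incseq:
  fixes P :: "real \<Rightarrow> real"
  assumes "mono_on W P" "P ` W \<subseteq> W" "v \<in> W" "v \<le> P v"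
  shows "incseq (\<lambda>n. (P ^^ n) v)"
proof (rule incseq_SucI)
  show "(P ^^ n) v \<le> (P ^^ Suc n) v" for n
  proof (induction n)
    case (Suc n)
    have "(P ^^ Suc n) v \<in> W" by (rule funpow_in[OF assms(2,3)])
    then show ?case using mono_onD[OF assms(1) funpow_in[OF assms(2,3)] _ Suc] by simp
  qed (simp add: assms(4))
qed

lemma mono_on_funpow_decseq:
  fixes P :: "real \<Rightarrow> real"
  assumes "mono_on W P" "P ` W \<subseteq> W" "v \<in> W" "P v \<le> v"
  shows "decseq (\<lambda>n. (P ^^ n) v)"
proof (rule decseq_SucI)
  show "(P ^^ Suc n) v \<le> (P ^^ n) v" for n
  proof (induction n)
    case (Suc n)
    have "(P ^^ Suc n) v \<in> W" by (rule funpow_in[OF assms(2,3)])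
    then show ?case using mono_onD[OF assms(1) _ funpow_in[OF assms(2,3)] Suc] by simp
  qed (simp add: assms(4))
qed

lemma orbit_limit_fixed_point:
  fixes P :: "'a::t2_space \<Rightarrow> 'a"
  assumes "continuous_on W P" "P ` W \<subseteq> W" "v \<in> W" "m \<in> W" "(\<lambda>n. (P ^^ n) v) \<longlonglongrightarrow> m"
  shows "P m = m"
proof -
  have "\<forall>\<^sub>F n in sequentially. (P ^^ n) v \<in> W" using funpow_in[OF assms(2,3)] by simp
  then have "(\<lambda>n. P ((P ^^ n) v)) \<longlonglongrightarrow> P m" by (rule continuous_on_tendsto_compose[OF assms(1,5,4)])
  moreover have "(\<lambda>n. P ((P ^^ n) v)) \<longlonglongrightarrow> m"
    using LIMSEQ_Suc[OF assms(5)] by simp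
  ultimately show ?thesis using LIMSEQ_unique by blast
qed

lemma mono_on_orbit_converges:
  fixes P :: "real \<Rightarrow> real"
  assumes "mono_on W P" "P ` W \<subseteq> W" "w \<in> W" "compact K" "\<And>n. (P ^^ n) w \<in> K"
  obtains m where "m \<in> K" "(\<lambda>n. (P ^^ n) w) \<longlonglongrightarrow> m"
proof -
  have "monoseq (\<lambda>n. (P ^^ n) w)"
    using mono_on_funpow_incseq[OF assms(1-3)] mono_on_funpow_decseq[OF assms(1-3)]
    by (cases "w \<le> P w") (auto simp: monoseq_iff)
  moreover have "Bseq (\<lambda>n. (P ^^ n) w)"
    unfolding Bseq_eq_bounded using assms(5) compact_imp_bounded[OF assms(4)]
    by (auto intro: bounded_subset)
  ultimately obtain m where lim: "(\<lambda>n. (P ^^ n) w) \<longlonglongrightarrow> m"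
    using Bseq_monoseq_convergent convergent_def by blast
  moreover have "m \<in> K" using closed_sequentially[OF compact_imp_closed[OF assms(4)] assms(5) lim] .
  ultimately show thesis using that by blast
qed

lemma attracting_fixed_point_pushes_inward:
  fixes P :: "real \<Rightarrow> real"
  assumes "mono_on W P" "P ` W \<subseteq> W"
    and attr: "\<And>v. v \<in> W \<Longrightarrow> \<bar>v - m\<bar> < \<gamma> \<Longrightarrow> (\<lambda>n. (P ^^ n) v) \<longlonglongrightarrow> m"
    and "v \<in> W" "\<bar>v - m\<bar> < \<gamma>"
  shows "v < m \<Longrightarrow> v < P v" and "m < v \<Longrightarrow> P v < v"
proof -
  show "v < P v" if "v < m"
  proof (rule ccontr)
    assume "\<not> v < P v"
    then have "decseq (\<lambda>n. (P ^^ n) v)" using mono_on_funpow_decseq assms(1,2,4) by simp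
    from decseq_ge[OF this attr[OF assms(4,5)], of 0] that show False by simp
  qed
  show "P v < v" if "m < v"
  proof (rule ccontr)
    assume "\<not> P v < v"
    then have "incseq (\<lambda>n. (P ^^ n) v)" using mono_on_funpow_incseq assms(1,2,4) by simp
    from incseq_le[OF this attr[OF assms(4,5)], of 0] that show False by simp
  qed
qed

section \<open>Asymptotically autonomous monotone recursions\<close>

lemma eventually_trapped:
  fixes f :: "real \<Rightarrow> 'y \<Rightarrow> real"
  assumes mono: "\<And>v w z. v \<in> W \<Longrightarrow> w \<in> W \<Longrightarrow> v \<le> w \<Longrightarrow> f v z \<le> f w z"
    and rec: "\<And>k. u (Suc k) = f (u k) (y k)" and "\<And>k. u k \<in> W" "a \<in> W" "b \<in> W"
    and barrier: "\<forall>\<^sub>F k in sequentially. a < f a (y k) \<and> f b (y k) < b"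
    and "\<exists>\<^sub>F k in sequentially. a \<le> u k \<and> u k \<le> b"
  shows "\<forall>\<^sub>F k in sequentially. a \<le> u k \<and> u k \<le> b"
proof -
  obtain N where N: "\<And>k. k \<ge> N \<Longrightarrow> a < f a (y k) \<and> f b (y k) < b"
    using barrier unfolding eventually_sequentially by blast
  obtain k0 where "k0 \<ge> N" and start: "a \<le> u k0 \<and> u k0 \<le> b"
    using assms(7) unfolding frequently_sequentially by blast
  have "a \<le> u (k0 + j) \<and> u (k0 + j) \<le> b" for j
  proof (induction j)
    case 0
    show ?case using start by simp
  next
    case (Suc j)
    then have "f a (y (k0 + j)) \<le> u (Suc (k0 + j)) \<and> u (Suc (k0 + j)) \<le> f b (y (k0 + j))"
      using mono assms(3-5) by (simp add: rec)
    moreover have "a < f a (y (k0 + j)) \<and> f b (y (k0 + j)) < b" using N \<open>k0 \<ge> N\<close> by simp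
    ultimately show ?case by simp
  qed
  then show ?thesis unfolding eventually_sequentially by (metis le_add_diff_inverse)
qed

lemma monotone_recursion_fixed_cluster_point:
  fixes f :: "real \<Rightarrow> 'y::metric_space \<Rightarrow> real"
  assumes cont: "continuous_on (W \<times> UNIV) (\<lambda>(v, z). f v z)"
    and maps: "\<And>v z. v \<in> W \<Longrightarrow> f v z \<in> W"
    and mono: "\<And>v w z. v \<in> W \<Longrightarrow> w \<in> W \<Longrightarrow> v \<le> w \<Longrightarrow> f v z \<le> f w z"
    and rec: "\<And>k. u (Suc k) = f (u k) (y k)" and "y \<longlonglongrightarrow> q"
    and "compact K" "K \<subseteq> W" "\<And>k. u k \<in> K"
  obtains m where "m \<in> W" "f m q = m" "cluster_point u m"
proof -
  define P where "P v = f v q" for v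
  have P_W: "P ` W \<subseteq> W" using maps by (auto simp: P_def)
  have "mono_on W P" using mono by (auto simp: P_def intro: mono_onI)
  have "continuous_on W P"
    using continuous_on_compose2[OF cont continuous_on_Pair[OF continuous_on_id' continuous_on_const]]
    by (auto simp: P_def)
  have invariant: "cluster_point u (P v)" if "cluster_point u v" "v \<in> W" for v
  proof -
    have "cluster_point (\<lambda>k. f (u k) (y k)) (f v q)"
      using cluster_point_continuous_image[OF cont _ _ cluster_point_Pair[OF that(1) \<open>y \<longlonglongrightarrow> q\<close>]]
        assms(7,8) that(2) by auto
    then show ?thesis using cluster_point_Suc[of u "f v q"] by (simp add: rec P_def)
  qed
  obtain w where "w \<in> K" "cluster_point u w" using compact_cluster_point assms(6,8) by blast
  have orbit: "cluster_point u ((P ^^ n) w) \<and> (P ^^ n) w \<in> K" for n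
  proof (induction n)
    case 0
    show ?case using \<open>w \<in> K\<close> \<open>cluster_point u w\<close> by simp
  next
    case (Suc n)
    then have "cluster_point u ((P ^^ Suc n) w)" using invariant assms(7) by auto
    then show ?case using cluster_point_in_closed compact_imp_closed assms(6,8) by blast
  qed
  have "w \<in> W" using \<open>w \<in> K\<close> assms(7) by blast
  then obtain m where "m \<in> K" and lim: "(\<lambda>n. (P ^^ n) w) \<longlonglongrightarrow> m"
    using mono_on_orbit_converges[OF \<open>mono_on W P\<close> P_W _ assms(6)] orbit by blast
  then have "m \<in> W" using assms(7) by blast
  show thesis
  proof
    show "m \<in> W" by fact
    show "f m q = m"
      using orbit_limit_fixed_point[OF \<open>continuous_on W P\<close> P_W \<open>w \<in> W\<close> \<open>m \<in> W\<close> lim] by (simp add: P_def)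
    show "cluster_point u m" using cluster_point_limit[OF _ lim] orbit by blast
  qed
qed

lemma monotone_recursion_converges_to_attractor:
  fixes f :: "real \<Rightarrow> 'y::metric_space \<Rightarrow> real"
  assumes "open W"
    and cont: "continuous_on (W \<times> UNIV) (\<lambda>(v, z). f v z)"
    and maps: "\<And>v z. v \<in> W \<Longrightarrow> f v z \<in> W"
    and mono: "\<And>v w z. v \<in> W \<Longrightarrow> w \<in> W \<Longrightarrow> v \<le> w \<Longrightarrow> f v z \<le> f w z"
    and rec: "\<And>k. u (Suc k) = f (u k) (y k)" and "y \<longlonglongrightarrow> q" and "\<And>k. u k \<in> W"
    and "m \<in> W" "cluster_point u m" "\<gamma> > 0"
    and attr: "\<And>v. v \<in> W \<Longrightarrow> \<bar>v - m\<bar> < \<gamma> \<Longrightarrow> (\<lambda>n. ((\<lambda>v. f v q) ^^ n) v) \<longlonglongrightarrow> m"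
  shows "u \<longlonglongrightarrow> m"
proof (rule tendstoI)
  fix e :: real assume "e > 0"
  obtain \<rho> where "\<rho> > 0" "ball m \<rho> \<subseteq> W" using \<open>open W\<close> \<open>m \<in> W\<close> open_contains_ball by blast
  define \<epsilon> where "\<epsilon> = min (e/2) (min \<gamma> \<rho> / 2)"
  have \<epsilon>: "0 < \<epsilon>" "\<epsilon> < e" "\<epsilon> < \<gamma>" "\<epsilon> < \<rho>"
    using \<open>e > 0\<close> \<open>\<gamma> > 0\<close> \<open>\<rho> > 0\<close> by (auto simp: \<epsilon>_def)
  define a where "a = m - \<epsilon>"
  define b where "b = m + \<epsilon>"
  have "a \<in> W" "b \<in> W" using \<open>ball m \<rho> \<subseteq> W\<close> \<epsilon> by (auto simp: a_def b_def dist_real_def)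
  have "mono_on W (\<lambda>v. f v q)" using mono by (auto intro: mono_onI)
  moreover have "(\<lambda>v. f v q) ` W \<subseteq> W" using maps by auto
  ultimately have inward: "a < f a q" "f b q < b"
    using attracting_fixed_point_pushes_inward[OF _ _ attr] \<open>a \<in> W\<close> \<open>b \<in> W\<close> \<epsilon>
    by (auto simp: a_def b_def)
  have lim: "(\<lambda>k. f c (y k)) \<longlonglongrightarrow> f c q" if "c \<in> W" for c
    using continuous_on_tendsto_compose[OF cont tendsto_Pair[OF tendsto_const \<open>y \<longlonglongrightarrow> q\<close>]] that
    by simp
  have "\<exists>\<^sub>F k in sequentially. dist (u k) m < \<epsilon>"
    using \<open>cluster_point u m\<close> \<epsilon>(1) unfolding cluster_point_def by blast
  then have "\<exists>\<^sub>F k in sequentially. a \<le> u k \<and> u k \<le> b"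
    by (rule frequently_elim1) (auto simp: a_def b_def dist_real_def)
  moreover have "\<forall>\<^sub>F k in sequentially. a < f a (y k) \<and> f b (y k) < b"
    using order_tendstoD(1)[OF lim[OF \<open>a \<in> W\<close>] inward(1)]
      order_tendstoD(2)[OF lim[OF \<open>b \<in> W\<close>] inward(2)] by (rule eventually_conj)
  ultimately have "\<forall>\<^sub>F k in sequentially. a \<le> u k \<and> u k \<le> b"
    using eventually_trapped[where f = f and W = W and u = u and y = y, OF mono rec assms(7)]
      \<open>a \<in> W\<close> \<open>b \<in> W\<close> by blast
  then show "\<forall>\<^sub>F k in sequentially. dist (u k) m < e"
  proof (rule eventually_mono)
    fix k assume "a \<le> u k \<and> u k \<le> b"
    then show "dist (u k) m < e" using \<epsilon> by (simp add: a_def b_def dist_real_def abs_less_iff)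
  qed
qed

section \<open>Time sets\<close>

lemma time_set_pos_part_multiple:
  assumes "time_set S" "\<tau> \<in> pos_part S"
  shows "real k * \<tau> \<in> pos_part S"
  using assms by (auto simp: time_set_def pos_part_def intro: Ints_mult)

lemma time_set_closed: "time_set S \<Longrightarrow> closed S"
  by (auto simp: time_set_def closed_Ints)

lemma time_set_floor_remainder:
  assumes "time_set S" "\<tau> \<in> pos_part S" "\<tau> > 0" "t \<in> pos_part S"
  shows "t - real (nat \<lfloor>t / \<tau>\<rfloor>) * \<tau> \<in> {0..\<tau>} \<inter> S"
proof -
  let ?k = "nat \<lfloor>t / \<tau>\<rfloor>"
  have "real ?k = of_int \<lfloor>t / \<tau>\<rfloor>" using assms(3,4) by (simp add: pos_part_def)
  then have "real ?k \<le> t / \<tau>" "t / \<tau> < real ?k + 1" by linarith+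
  then have "0 \<le> t - real ?k * \<tau>" "t - real ?k * \<tau> \<le> \<tau>"
    using assms(3) by (simp_all add: field_simps)
  moreover have "t - real ?k * \<tau> \<in> S"
    using assms time_set_pos_part_multiple[OF assms(1,2)]
    by (auto simp: time_set_def pos_part_def intro: Ints_diff)
  ultimately show ?thesis by simp
qed

lemma tends_zero_on_iff_eventually:
  "tends_zero_on S f \<longleftrightarrow> (\<forall>e>0. \<forall>\<^sub>F t in at_top. t \<in> S \<longrightarrow> \<bar>f t\<bar> < e)"
  unfolding tends_zero_on_def eventually_at_top_linorder by blast

lemma tends_zero_on_sample:
  assumes "tends_zero_on S f" "\<tau> > 0" "\<And>n. real n * \<tau> \<in> S"
  shows "(\<lambda>n. f (real n * \<tau>)) \<longlonglongrightarrow> 0"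
proof (rule tendstoI)
  fix e :: real assume "e > 0"
  have "filterlim (\<lambda>n. \<tau> * real n) at_top sequentially"
    using filterlim_tendsto_pos_mult_at_top[OF tendsto_const assms(2) filterlim_real_sequentially] .
  then have "filterlim (\<lambda>n. real n * \<tau>) at_top sequentially" by (simp add: mult.commute)
  moreover have "\<forall>\<^sub>F t in at_top. t \<in> S \<longrightarrow> \<bar>f t\<bar> < e"
    using assms(1) \<open>e > 0\<close> by (simp add: tends_zero_on_iff_eventually)
  ultimately show "\<forall>\<^sub>F n in sequentially. dist (f (real n * \<tau>)) 0 < e"
    using assms(3) by (auto dest: eventually_compose_filterlim elim: eventually_mono)
qed

lemma tends_zero_on_dist_Pair:
  assumes "tends_zero_on S (\<lambda>t. dist (a t) (c t))" "tends_zero_on S (\<lambda>t. dist (b t) (d t))"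
  shows "tends_zero_on S (\<lambda>t. dist (a t, b t) (c t, d t))"
  unfolding tends_zero_on_iff_eventually
proof (intro allI impI)
  fix e :: real assume "e > 0"
  then have "\<forall>\<^sub>F t in at_top. t \<in> S \<longrightarrow> dist (a t) (c t) < e/2"
    and "\<forall>\<^sub>F t in at_top. t \<in> S \<longrightarrow> dist (b t) (d t) < e/2"
    using assms[unfolded tends_zero_on_iff_eventually, rule_format, of "e/2"] by simp_all
  then show "\<forall>\<^sub>F t in at_top. t \<in> S \<longrightarrow> \<bar>dist (a t, b t) (c t, d t)\<bar> < e"
  proof eventually_elim
    case (elim t)
    then show ?case using dist_Pair_le_add[of "a t" "b t" "c t" "d t"] by auto
  qed
qed

section \<open>Monotone cocycles over an asymptotically periodic base\<close>

lemma dyn_system_periodic_multiple: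
  assumes "dyn_system S \<sigma>" "time_set S" "\<tau> \<in> pos_part S" "\<sigma> \<tau> p = p"
  shows "\<sigma> (real k * \<tau>) p = p"
proof (induction k)
  case 0
  then show ?case using assms(1) by (simp add: dyn_system_def)
next
  case (Suc k)
  have "real k * \<tau> \<in> S" "\<tau> \<in> S"
    using time_set_pos_part_multiple[OF assms(2,3)] assms(3) by (simp_all add: pos_part_def)
  then have "\<sigma> (\<tau> + real k * \<tau>) p = \<sigma> \<tau> (\<sigma> (real k * \<tau>) p)"
    using assms(1) by (simp add: dyn_system_def)
  then show ?case using Suc assms(4) by (simp add: algebra_simps)
qed

lemma asymp_periodic_limit:
  assumes "dyn_system S \<sigma>" "time_set S" "\<tau> \<in> pos_part S" "\<tau> > 0"
    and "asymp_periodic S UNIV \<sigma> \<tau> y0" "(\<lambda>k. \<sigma> (real k * \<tau>) y0) \<longlonglongrightarrow> q"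
  shows "\<sigma> \<tau> q = q" "tends_zero_on (pos_part S) (\<lambda>t. dist (\<sigma> t y0) (\<sigma> t q))"
proof -
  obtain p where p: "\<sigma> \<tau> p = p" "tends_zero_on (pos_part S) (\<lambda>t. dist (\<sigma> t y0) (\<sigma> t p))"
    using assms(5) unfolding asymp_periodic_def by blast
  have "(\<lambda>k. dist (\<sigma> (real k * \<tau>) y0) p) \<longlonglongrightarrow> 0"
    using tends_zero_on_sample[OF p(2) assms(4) time_set_pos_part_multiple[OF assms(2,3)]]
    by (simp add: dyn_system_periodic_multiple[OF assms(1-3) p(1)])
  then have "p = q" using assms(6) LIMSEQ_unique by (auto simp: tendsto_dist_iff[symmetric])
  with p show "\<sigma> \<tau> q = q" "tends_zero_on (pos_part S) (\<lambda>t. dist (\<sigma> t y0) (\<sigma> t q))" by auto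
qed

lemma monotone_cocycleD:
  assumes "monotone_cocycle S W \<phi> \<sigma>"
  shows "continuous_on (pos_part S \<times> W \<times> UNIV) (\<lambda>(t, u, y). \<phi> t u y)"
    and "\<And>t u y. t \<in> pos_part S \<Longrightarrow> u \<in> W \<Longrightarrow> \<phi> t u y \<in> W"
    and "\<And>u y. u \<in> W \<Longrightarrow> \<phi> 0 u y = u"
    and "\<And>t s u y. t \<in> pos_part S \<Longrightarrow> s \<in> pos_part S \<Longrightarrow> u \<in> W \<Longrightarrow>
           \<phi> (t + s) u y = \<phi> t (\<phi> s u y) (\<sigma> s y)"
    and "\<And>t u1 u2 y. t \<in> pos_part S \<Longrightarrow> u1 \<in> W \<Longrightarrow> u2 \<in> W \<Longrightarrow> u1 \<le> u2 \<Longrightarrow>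
           \<phi> t u1 y \<le> \<phi> t u2 y"
  using assms unfolding monotone_cocycle_def by blast+

lemma cocycle_multiple_Suc:
  assumes "monotone_cocycle S W \<phi> \<sigma>" "time_set S" "\<tau> \<in> pos_part S" "u \<in> W"
  shows "\<phi> (real (Suc k) * \<tau>) u y = \<phi> \<tau> (\<phi> (real k * \<tau>) u y) (\<sigma> (real k * \<tau>) y)"
  using monotone_cocycleD(4)[OF assms(1,3) time_set_pos_part_multiple[OF assms(2,3)] assms(4)]
  by (simp add: algebra_simps)

lemma cocycle_multiple_funpow:
  assumes "monotone_cocycle S W \<phi> \<sigma>" "dyn_system S \<sigma>" "time_set S" "\<tau> \<in> pos_part S"
    and "\<sigma> \<tau> q = q" "v \<in> W"
  shows "\<phi> (real k * \<tau>) v q = ((\<lambda>v. \<phi> \<tau> v q) ^^ k) v"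
proof (induction k)
  case 0
  show ?case using monotone_cocycleD(3)[OF assms(1) assms(6)] by simp
next
  case (Suc k)
  then show ?case
    by (simp only: cocycle_multiple_Suc[OF assms(1,3,4,6)] dyn_system_periodic_multiple[OF assms(2-5)]
        funpow.simps comp_def)
qed

lemma cocycle_periodic_multiple:
  assumes "monotone_cocycle S W \<phi> \<sigma>" "dyn_system S \<sigma>" "time_set S" "\<tau> \<in> pos_part S"
    and "\<sigma> \<tau> q = q" "m \<in> W" "\<phi> \<tau> m q = m"
  shows "\<phi> (real k * \<tau>) m q = m"
proof -
  have "((\<lambda>v. \<phi> \<tau> v q) ^^ k) m = m" by (induction k) (simp_all add: assms(7))
  then show ?thesis using cocycle_multiple_funpow[OF assms(1-6)] by simp
qed

lemma monotone_cocycle_time_section: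
  assumes "monotone_cocycle S W \<phi> \<sigma>" "t \<in> pos_part S"
  shows "continuous_on (W \<times> UNIV) (\<lambda>(v, z). \<phi> t v z)"
proof -
  have "continuous_on (W \<times> UNIV) (\<lambda>p. (t, p))" by (intro continuous_intros)
  moreover have "(\<lambda>p. (t, p)) ` (W \<times> UNIV) \<subseteq> pos_part S \<times> W \<times> UNIV" using assms(2) by auto
  ultimately have "continuous_on (W \<times> UNIV) (\<lambda>p. (\<lambda>(t, u, y). \<phi> t u y) (t, p))"
    by (rule continuous_on_compose2[OF monotone_cocycleD(1)[OF assms(1)]])
  then show ?thesis by (simp add: split_def)
qed

lemma pos_lagrange_stable_samples:
  assumes "pos_lagrange_stable S (W \<times> UNIV) (skew \<phi> \<sigma>) (u0, y0)" "time_set S" "\<tau> \<in> pos_part S"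
  obtains K where "compact K" "K \<subseteq> W" "\<And>k. \<phi> (real k * \<tau>) u0 y0 \<in> K"
proof -
  obtain K where K: "compact K" "K \<subseteq> W \<times> UNIV" "(\<lambda>t. skew \<phi> \<sigma> t (u0, y0)) ` pos_part S \<subseteq> K"
    using assms(1) unfolding pos_lagrange_stable_def by blast
  show thesis
  proof (rule that)
    show "compact (fst ` K)" using K(1) by (intro compact_continuous_image continuous_intros)
    show "fst ` K \<subseteq> W" using K(2) by auto
    show "\<phi> (real k * \<tau>) u0 y0 \<in> fst ` K" for k
      using K(3) time_set_pos_part_multiple[OF assms(2,3)] by (force simp: skew_def)
  qed
qed

lemma pos_asymp_stable_attracts_iterates:
  assumes "monotone_cocycle S W \<phi> \<sigma>" "dyn_system S \<sigma>" "time_set S" "\<tau> \<in> pos_part S" "\<tau> > 0"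
    and "\<sigma> \<tau> q = q" "m \<in> W" "\<phi> \<tau> m q = m" "pos_asymp_stable S W \<phi> m q"
  obtains \<gamma> where "\<gamma> > 0"
    "\<And>v. v \<in> W \<Longrightarrow> \<bar>v - m\<bar> < \<gamma> \<Longrightarrow> (\<lambda>n. ((\<lambda>v. \<phi> \<tau> v q) ^^ n) v) \<longlonglongrightarrow> m"
proof -
  obtain \<gamma> where "\<gamma> > 0" and attr: "\<And>v. v \<in> W \<Longrightarrow> \<bar>v - m\<bar> < \<gamma> \<Longrightarrow>
      tends_zero_on (pos_part S) (\<lambda>t. \<phi> t v q - \<phi> t m q)"
    using assms(9) unfolding pos_asymp_stable_def by blast
  have "(\<lambda>n. ((\<lambda>v. \<phi> \<tau> v q) ^^ n) v) \<longlonglongrightarrow> m" if "v \<in> W" "\<bar>v - m\<bar> < \<gamma>" for v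
    using tends_zero_on_sample[OF attr[OF that] assms(5) time_set_pos_part_multiple[OF assms(3,4)]]
    by (simp add: cocycle_multiple_funpow[OF assms(1-4,6) that(1)]
        cocycle_periodic_multiple[OF assms(1-4,6-8)] LIM_zero_iff)
  with \<open>\<gamma> > 0\<close> show thesis using that by blast
qed

lemma cocycle_converges_along_sampled_limit:
  assumes cocycle: "monotone_cocycle S W \<phi> \<sigma>" and "dyn_system S \<sigma>" "time_set S"
    and "\<tau> \<in> pos_part S" "\<tau> > 0" "\<sigma> \<tau> q = q" "u0 \<in> W" "m \<in> W" "\<phi> \<tau> m q = m"
    and u_lim: "(\<lambda>k. \<phi> (real k * \<tau>) u0 y0) \<longlonglongrightarrow> m"
    and y_lim: "(\<lambda>k. \<sigma> (real k * \<tau>) y0) \<longlonglongrightarrow> q"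
  shows "tends_zero_on (pos_part S) (\<lambda>t. \<phi> t u0 y0 - \<phi> t m q)"
proof -
  let ?I = "{0..\<tau>} \<inter> S"
  let ?u = "\<lambda>k. \<phi> (real k * \<tau>) u0 y0" and ?y = "\<lambda>k. \<sigma> (real k * \<tau>) y0"
  have I: "?I \<subseteq> pos_part S" by (auto simp: pos_part_def)
  have kT: "real k * \<tau> \<in> pos_part S" for k
    using time_set_pos_part_multiple[OF \<open>time_set S\<close> \<open>\<tau> \<in> pos_part S\<close>] .
  have cont: "continuous_on (?I \<times> W \<times> UNIV) (\<lambda>(s, v, z). \<phi> s v z)"
    by (rule continuous_on_subset[OF monotone_cocycleD(1)[OF cocycle]]) (use I in auto)
  have "compact ?I" using compact_Int_closed[OF compact_Icc time_set_closed[OF \<open>time_set S\<close>]] .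
  moreover have "?u k \<in> W" for k using monotone_cocycleD(2)[OF cocycle kT \<open>u0 \<in> W\<close>] .
  ultimately have unif: "uniform_limit ?I (\<lambda>k s. \<phi> s (?u k) (?y k)) (\<lambda>s. \<phi> s m q) sequentially"
    using uniform_limit_compose_convergent[OF cont _ _ _ tendsto_Pair[OF u_lim y_lim]] \<open>m \<in> W\<close>
    by simp
  show ?thesis unfolding tends_zero_on_def
  proof (intro allI impI)
    fix e :: real assume "e > 0"
    then obtain N where N: "\<And>k s. k \<ge> N \<Longrightarrow> s \<in> ?I \<Longrightarrow> \<bar>\<phi> s (?u k) (?y k) - \<phi> s m q\<bar> < e"
      using uniform_limitD[OF unif] unfolding eventually_sequentially dist_real_def by blast
    show "\<exists>T. \<forall>t\<in>pos_part S. T \<le> t \<longrightarrow> \<bar>\<phi> t u0 y0 - \<phi> t m q\<bar> < e"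
    proof (intro exI ballI impI)
      fix t assume t: "t \<in> pos_part S" "real N * \<tau> \<le> t"
      define k where "k = nat \<lfloor>t / \<tau>\<rfloor>"
      define s where "s = t - real k * \<tau>"
      have "s \<in> ?I"
        using time_set_floor_remainder[OF \<open>time_set S\<close> \<open>\<tau> \<in> pos_part S\<close> \<open>\<tau> > 0\<close> t(1)]
        by (simp add: s_def k_def)
      have "N \<le> k" using t(2) \<open>\<tau> > 0\<close> by (simp add: k_def le_nat_floor pos_le_divide_eq)
      have t_eq: "t = s + real k * \<tau>" by (simp add: s_def)
      have "s \<in> pos_part S" using \<open>s \<in> ?I\<close> I by blast
      have "\<phi> t u0 y0 = \<phi> s (?u k) (?y k)"
        unfolding t_eq by (rule monotone_cocycleD(4)[OF cocycle \<open>s \<in> pos_part S\<close> kT \<open>u0 \<in> W\<close>])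
      moreover have "\<phi> t m q = \<phi> s m q"
        unfolding t_eq monotone_cocycleD(4)[OF cocycle \<open>s \<in> pos_part S\<close> kT \<open>m \<in> W\<close>]
        by (simp only: cocycle_periodic_multiple[OF assms(1-4,6,8,9)]
            dyn_system_periodic_multiple[OF assms(2-4,6)])
      ultimately show "\<bar>\<phi> t u0 y0 - \<phi> t m q\<bar> < e" using N[OF \<open>N \<le> k\<close> \<open>s \<in> ?I\<close>] by simp
    qed
  qed
qed

theorem mainTheorem11:
  fixes S W :: "real set"
    and \<phi> :: "real \<Rightarrow> real \<Rightarrow> 'y::complete_space \<Rightarrow> real"
    and \<sigma> :: "real \<Rightarrow> 'y \<Rightarrow> 'y"
    and \<tau> u0 :: real and y0 q :: 'y
  assumes "time_set S"
    and "dyn_system S \<sigma>"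
    and "open W" and "is_interval W" and "W \<noteq> {}"
    and "monotone_cocycle S W \<phi> \<sigma>"
    and "\<tau> \<in> pos_part S" and "\<tau> > 0"
    and strict: "\<And>(k::nat) u1 u2 y. u1 \<in> W \<Longrightarrow> u2 \<in> W \<Longrightarrow> u1 < u2 \<Longrightarrow>
                  \<phi> (real k * \<tau>) u1 y < \<phi> (real k * \<tau>) u2 y"
    and "u0 \<in> W"
    and "pos_lagrange_stable S (W \<times> UNIV) (skew \<phi> \<sigma>) (u0, y0)"
    and "asymp_periodic S UNIV \<sigma> \<tau> y0"
    and "(\<lambda>k::nat. \<sigma> (real k * \<tau>) y0) \<longlonglongrightarrow> q"
    and "\<And>u. u \<in> W \<Longrightarrow> \<phi> \<tau> u q = u \<Longrightarrow> pos_asymp_stable S W \<phi> u q"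
  shows "asymp_periodic S (W \<times> UNIV) (skew \<phi> \<sigma>) \<tau> (u0, y0)"
proof -
  note cocycle = monotone_cocycleD[OF assms(6)]
  have q_fixed: "\<sigma> \<tau> q = q"
    and y_conv: "tends_zero_on (pos_part S) (\<lambda>t. dist (\<sigma> t y0) (\<sigma> t q))"
    using asymp_periodic_limit[OF assms(2,1,7,8,12,13)] by blast+
  define u where "u k = \<phi> (real k * \<tau>) u0 y0" for k
  have rec: "u (Suc k) = \<phi> \<tau> (u k) (\<sigma> (real k * \<tau>) y0)" for k
    unfolding u_def using cocycle_multiple_Suc[OF assms(6,1,7,10)] .
  have cont: "continuous_on (W \<times> UNIV) (\<lambda>(v, z). \<phi> \<tau> v z)"
    using monotone_cocycle_time_section[OF assms(6,7)] .
  obtain K where "compact K" "K \<subseteq> W" "\<And>k. u k \<in> K"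
    using pos_lagrange_stable_samples[OF assms(11,1,7)] unfolding u_def by blast
  then obtain m where "m \<in> W" "\<phi> \<tau> m q = m" "cluster_point u m"
    using monotone_recursion_fixed_cluster_point[OF cont cocycle(2)[OF assms(7)]
        cocycle(5)[OF assms(7)] rec assms(13)] by blast
  moreover obtain \<gamma> where "\<gamma> > 0" and attr: "\<And>v. v \<in> W \<Longrightarrow> \<bar>v - m\<bar> < \<gamma> \<Longrightarrow>
      (\<lambda>n. ((\<lambda>v. \<phi> \<tau> v q) ^^ n) v) \<longlonglongrightarrow> m"
    using pos_asymp_stable_attracts_iterates[OF assms(6,2,1,7,8) q_fixed \<open>m \<in> W\<close> \<open>\<phi> \<tau> m q = m\<close>]
      assms(14) \<open>m \<in> W\<close> \<open>\<phi> \<tau> m q = m\<close> by blast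
  ultimately have "u \<longlonglongrightarrow> m"
    using monotone_recursion_converges_to_attractor[OF assms(3) cont cocycle(2)[OF assms(7)]
        cocycle(5)[OF assms(7)] rec assms(13)] \<open>K \<subseteq> W\<close> \<open>\<And>k. u k \<in> K\<close> by blast
  then have "tends_zero_on (pos_part S) (\<lambda>t. \<phi> t u0 y0 - \<phi> t m q)"
    using cocycle_converges_along_sampled_limit[OF assms(6,2,1,7,8) q_fixed assms(10) \<open>m \<in> W\<close>
        \<open>\<phi> \<tau> m q = m\<close> _ assms(13)] unfolding u_def by blast
  then have "tends_zero_on (pos_part S) (\<lambda>t. dist (\<phi> t u0 y0) (\<phi> t m q))"
    by (simp add: tends_zero_on_def dist_real_def)
  then have "tends_zero_on (pos_part S) (\<lambda>t. dist (skew \<phi> \<sigma> t (u0, y0)) (skew \<phi> \<sigma> t (m, q)))"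
    using tends_zero_on_dist_Pair[OF _ y_conv] by (simp add: skew_def)
  moreover have "skew \<phi> \<sigma> \<tau> (m, q) = (m, q)" using \<open>\<phi> \<tau> m q = m\<close> q_fixed by (simp add: skew_def)
  ultimately show ?thesis using \<open>m \<in> W\<close> unfolding asymp_periodic_def by auto
qed

end
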